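(* For $a\in\mathbb{C}\setminus\{0\}$ let $f_a(z)=\dfrac{z^2-a}{z^2+a}$. If $a\neq\pm1$, then $\mathrm{Deck}(f_a^k)\cong V_4$ for all $k\ge2$ (explicitly, $\mathrm{Deck}(f_a^2)=\{z,\,-z,\,a/z,\,-a/z\}$).
   Context: $\mathrm{Deck}(F)=\{\tau \text{ Möbius} : F\circ\tau=F\}$; $V_4$ is the Klein four-group; $f_a^k$ is the $k$-th iterate of $f_a$. *)

theory Defs
  imports Complex_Main "HOL-Algebra.Group"
begin

text \<open>The Riemann sphere: None is the point at infinity.\<close>
type_synonym sphere = "complex option"

definition moebius_app :: "complex \<Rightarrow> complex \<Rightarrow> complex \<Rightarrow> complex \<Rightarrow> sphere \<Rightarrow> sphere" where
  "moebius_app a b c d w =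
     (case w of
        Some z \<Rightarrow> (if c * z + d \<noteq> 0 then Some ((a * z + b) / (c * z + d)) else None)
      | None \<Rightarrow> (if c \<noteq> 0 then Some (a / c) else None))"

definition is_moebius :: "(sphere \<Rightarrow> sphere) \<Rightarrow> bool" where
  "is_moebius \<tau> \<longleftrightarrow> (\<exists>a b c d. a * d - b * c \<noteq> 0 \<and> \<tau> = moebius_app a b c d)"

definition f_map :: "complex \<Rightarrow> sphere \<Rightarrow> sphere" where
  "f_map a w =
     (case w of
        Some z \<Rightarrow> (if z^2 + a \<noteq> 0 then Some ((z^2 - a) / (z^2 + a)) else None)
      | None \<Rightarrow> Some 1)"

definition Deck :: "(sphere \<Rightarrow> sphere) \<Rightarrow> (sphere \<Rightarrow> sphere) set" where
  "Deck F = {\<tau>. is_moebius \<tau> \<and> F \<circ> \<tau> = F}"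

definition Deck_group :: "(sphere \<Rightarrow> sphere) \<Rightarrow> (sphere \<Rightarrow> sphere) monoid" where
  "Deck_group F = \<lparr>carrier = Deck F, monoid.mult = (\<circ>), one = id\<rparr>"

definition V4 :: "(bool \<times> bool) monoid" where
  "V4 = \<lparr>carrier = UNIV, monoid.mult = (\<lambda>(p, q) (r, s). (p \<noteq> r, q \<noteq> s)), one = (False, False)\<rparr>"

end

theory Submission
  imports Defs "HOL-Computational_Algebra.Polynomial"
begin

text \<open>Write \<open>\<phi>(w) = (w\<^sup>2 - a)/(w\<^sup>2 + a)\<close> for \<open>f\<^sub>a\<close> on \<open>\<complex>\<close>. A Moebius map \<open>\<tau>\<close> with
  \<open>f\<^sub>a\<^sup>n \<circ> \<tau> = f\<^sub>a\<^sup>n\<close> satisfies \<open>\<phi>\<^sup>n \<circ> \<tau> = \<phi>\<^sup>n\<close> off a finite set. Since \<open>\<phi>(v) = \<phi>(w)\<close> forces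
  \<open>v\<^sup>2 = w\<^sup>2\<close>, \<open>\<phi>(v) = -\<phi>(w)\<close> forces \<open>(v w)\<^sup>2 = a\<^sup>2\<close>, and rational functions form an integral
  domain, \<open>\<phi>\<^sup>j\<^sup>+\<^sup>1 \<circ> \<tau> = \<phi>\<^sup>j\<^sup>+\<^sup>1\<close> gives \<open>\<phi>\<^sup>j \<circ> \<tau> = \<plusminus>\<phi>\<^sup>j\<close>, while \<open>\<phi>\<^sup>j\<^sup>+\<^sup>1 \<circ> \<tau> = -\<phi>\<^sup>j\<^sup>+\<^sup>1\<close>
  gives \<open>(\<phi>\<^sup>j \<circ> \<tau>) \<cdot> \<phi>\<^sup>j = c\<close> with \<open>c = \<plusminus>a\<close>. Descending from \<open>j = n\<close> one ends with \<open>\<tau>(z) = \<plusminus>z\<close>,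
  or with \<open>\<tau>(z) = c/z\<close> (the second alternative at \<open>j = 0\<close>), because the second alternative
  at \<open>j \<ge> 1\<close> is impossible: pick \<open>z\<^sub>0\<close> where \<open>\<phi>\<^sup>j\<close> has nonzero derivative and the value
  \<open>-c\<close>; then \<open>H = c/\<phi>\<^sup>j\<close> takes the value \<open>-1\<close> at \<open>z\<^sub>0\<close> with nonzero derivative, and the
  rational function \<open>A = \<phi>\<^sup>j\<^sup>-\<^sup>1 \<circ> \<tau>\<close> satisfies \<open>A\<^sup>2 = a(1 + H)/(1 - H)\<close>, a function with a
  simple zero at \<open>z\<^sub>0\<close>, whereas squares of rational functions have zeros of even order only.
  Conversely, \<open>f\<^sub>a(-z) = f\<^sub>a(z)\<close> and \<open>f\<^sub>a(a/z) = -f\<^sub>a(z)\<close>, so \<open>\<plusminus>z\<close> and \<open>\<plusminus>a/z\<close> are deck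
  transformations of every \<open>f\<^sub>a\<^sup>n\<close> with \<open>n \<ge> 2\<close>; they form a Klein four-group.\<close>

section \<open>Rational functions modulo finite sets\<close>

text \<open>Equality is only required off a finite set, so the junk value \<open>x / 0 = 0\<close> at poles
  never matters.\<close>

definition rational_fun :: "(complex \<Rightarrow> complex) \<Rightarrow> bool" where
  "rational_fun h \<longleftrightarrow> (\<exists>P Q. Q \<noteq> 0 \<and> (MOST z. h z = poly P z / poly Q z))"

lemma MOST_poly_nonzero: "Q \<noteq> 0 \<Longrightarrow> MOST z. poly Q z \<noteq> (0::complex)"
  by (simp add: MOST_iff_cofinite poly_roots_finite)

lemma MOST_imp_infinite: "MOST z::complex. P z \<Longrightarrow> infinite {z. P z}"
  using INFM_iff_infinite MOST_INFM infinite_UNIV_char_0 by blast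

lemma MOST_not_both: "MOST z::complex. P z \<Longrightarrow> \<not> (MOST z. \<not> P z)"
  by (drule MOST_imp_infinite) (simp add: MOST_iff_cofinite)

lemma rational_funI: "Q \<noteq> 0 \<Longrightarrow> MOST z. h z = poly P z / poly Q z \<Longrightarrow> rational_fun h"
  unfolding rational_fun_def by blast

lemma rational_funE:
  assumes "rational_fun h"
  obtains P Q where "Q \<noteq> 0" "MOST z. h z = poly P z / poly Q z"
  using assms unfolding rational_fun_def by blast

lemma rational_fun_cong:
  assumes "rational_fun h" "MOST z. k z = h z"
  shows "rational_fun k"
proof -
  obtain P Q where Q: "Q \<noteq> 0" and h: "MOST z. h z = poly P z / poly Q z"
    using assms(1) by (rule rational_funE)
  have "MOST z. k z = poly P z / poly Q z"
    using assms(2) h by eventually_elim simp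
  with Q show ?thesis by (rule rational_funI)
qed

lemma rational_fun_const: "rational_fun (\<lambda>z. c)"
  by (rule rational_funI[of 1 _ "[:c:]"]) auto

lemma rational_fun_ident: "rational_fun (\<lambda>z. z)"
  by (rule rational_funI[of 1 _ "[:0, 1:]"]) auto

lemma rational_fun_add:
  assumes "rational_fun h" "rational_fun k"
  shows "rational_fun (\<lambda>z. h z + k z)"
proof -
  obtain P1 Q1 where Q1: "Q1 \<noteq> 0" and h: "MOST z. h z = poly P1 z / poly Q1 z"
    using assms(1) by (rule rational_funE)
  obtain P2 Q2 where Q2: "Q2 \<noteq> 0" and k: "MOST z. k z = poly P2 z / poly Q2 z"
    using assms(2) by (rule rational_funE)
  have "MOST z. h z + k z = poly (P1 * Q2 + P2 * Q1) z / poly (Q1 * Q2) z"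
    using h k MOST_poly_nonzero[OF Q1] MOST_poly_nonzero[OF Q2]
    by eventually_elim (simp add: field_simps)
  then show ?thesis by (rule rational_funI[rotated]) (use Q1 Q2 in simp)
qed

lemma rational_fun_mult:
  assumes "rational_fun h" "rational_fun k"
  shows "rational_fun (\<lambda>z. h z * k z)"
proof -
  obtain P1 Q1 where Q1: "Q1 \<noteq> 0" and h: "MOST z. h z = poly P1 z / poly Q1 z"
    using assms(1) by (rule rational_funE)
  obtain P2 Q2 where Q2: "Q2 \<noteq> 0" and k: "MOST z. k z = poly P2 z / poly Q2 z"
    using assms(2) by (rule rational_funE)
  have "MOST z. h z * k z = poly (P1 * P2) z / poly (Q1 * Q2) z"
    using h k by eventually_elim simp
  then show ?thesis by (rule rational_funI[rotated]) (use Q1 Q2 in simp)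
qed

lemma rational_fun_divide:
  assumes "rational_fun h" "rational_fun k"
  shows "rational_fun (\<lambda>z. h z / k z)"
proof -
  obtain P1 Q1 where Q1: "Q1 \<noteq> 0" and h: "MOST z. h z = poly P1 z / poly Q1 z"
    using assms(1) by (rule rational_funE)
  obtain P2 Q2 where Q2: "Q2 \<noteq> 0" and k: "MOST z. k z = poly P2 z / poly Q2 z"
    using assms(2) by (rule rational_funE)
  show ?thesis
  proof (cases "P2 = 0")
    case True
    have "MOST z. h z / k z = poly 0 z / poly 1 z"
      using k by eventually_elim (simp add: True)
    then show ?thesis by (rule rational_funI[rotated]) simp
  next
    case False
    have "MOST z. h z / k z = poly (P1 * Q2) z / poly (Q1 * P2) z"
      using h k MOST_poly_nonzero[OF Q1] MOST_poly_nonzero[OF Q2] MOST_poly_nonzero[OF False]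
      by eventually_elim (simp only:, simp add: field_simps)
    then show ?thesis by (rule rational_funI[rotated]) (use Q1 False in simp)
  qed
qed

lemma rational_fun_diff:
  "rational_fun h \<Longrightarrow> rational_fun k \<Longrightarrow> rational_fun (\<lambda>z. h z - k z)"
  using rational_fun_add[OF _ rational_fun_mult[OF rational_fun_const, of k "-1"], of h]
  by (rule rational_fun_cong) auto

lemma rational_fun_power2: "rational_fun h \<Longrightarrow> rational_fun (\<lambda>z. (h z)\<^sup>2)"
  by (simp add: power2_eq_square rational_fun_mult)

lemma rational_fun_zero_or_nonzero:
  assumes "rational_fun h"
  shows "(MOST z. h z = 0) \<or> (MOST z. h z \<noteq> 0)"
proof -
  obtain P Q where Q: "Q \<noteq> 0" and h: "MOST z. h z = poly P z / poly Q z"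
    using assms by (rule rational_funE)
  show ?thesis
  proof (cases "P = 0")
    case True
    with h show ?thesis by (auto elim: MOST_mono)
  next
    case False
    have "MOST z. h z \<noteq> 0"
      using h MOST_poly_nonzero[OF Q] MOST_poly_nonzero[OF False] by eventually_elim simp
    then show ?thesis ..
  qed
qed

lemma rational_fun_mult_eq_0:
  assumes "rational_fun h" "rational_fun k" "MOST z. h z * k z = 0"
  shows "(MOST z. h z = 0) \<or> (MOST z. k z = 0)"
proof (rule ccontr)
  assume "\<not> ?thesis"
  then have "MOST z. h z \<noteq> 0" "MOST z. k z \<noteq> 0"
    using assms(1,2) rational_fun_zero_or_nonzero by blast+
  then have "MOST z. \<not> h z * k z = 0" by eventually_elim simp
  with assms(3) show False using MOST_not_both by blast
qed

lemma rational_fun_square_eq: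
  assumes "rational_fun h" "rational_fun k" "MOST z. (h z)\<^sup>2 = (k z)\<^sup>2"
  shows "(MOST z. h z = k z) \<or> (MOST z. h z = - k z)"
proof -
  have "MOST z. (h z - k z) * (h z + k z) = 0"
    using assms(3) by eventually_elim (simp add: algebra_simps power2_eq_square)
  from rational_fun_mult_eq_0[OF rational_fun_diff[OF assms(1,2)] rational_fun_add[OF assms(1,2)] this]
  show ?thesis by (simp add: eq_neg_iff_add_eq_0)
qed

section \<open>Moebius maps\<close>

definition moebius :: "complex \<Rightarrow> complex \<Rightarrow> complex \<Rightarrow> complex \<Rightarrow> complex \<Rightarrow> complex" where
  "moebius \<alpha> \<beta> \<gamma> \<delta> z = (\<alpha> * z + \<beta>) / (\<gamma> * z + \<delta>)"

lemma moebius_app_Some: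
  "\<gamma> * z + \<delta> \<noteq> 0 \<Longrightarrow> moebius_app \<alpha> \<beta> \<gamma> \<delta> (Some z) = Some (moebius \<alpha> \<beta> \<gamma> \<delta> z)"
  by (simp add: moebius_app_def moebius_def)

lemma moebius_pole_numerator_nonzero:
  fixes \<alpha> \<beta> \<gamma> \<delta> z :: complex
  assumes "\<alpha> * \<delta> - \<beta> * \<gamma> \<noteq> 0" "\<gamma> * z + \<delta> = 0"
  shows "\<alpha> * z + \<beta> \<noteq> 0"
proof -
  have "\<alpha> * \<delta> - \<beta> * \<gamma> = \<alpha> * (\<gamma> * z + \<delta>) - \<gamma> * (\<alpha> * z + \<beta>)"
    by (simp add: algebra_simps)
  with assms show ?thesis by auto
qed

lemma MOST_moebius_denominator_nonzero:
  fixes \<alpha> \<beta> \<gamma> \<delta> :: complex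
  assumes "\<alpha> * \<delta> - \<beta> * \<gamma> \<noteq> 0"
  shows "MOST z. \<gamma> * z + \<delta> \<noteq> 0"
proof -
  have "[:\<delta>, \<gamma>:] \<noteq> 0" using assms by auto
  from MOST_poly_nonzero[OF this] show ?thesis by (simp add: algebra_simps)
qed

lemma finite_fibres_moebius:
  assumes "\<alpha> * \<delta> - \<beta> * \<gamma> \<noteq> 0"
  shows "finite (moebius \<alpha> \<beta> \<gamma> \<delta> -` {w})"
proof -
  have "[:\<beta> - w * \<delta>, \<alpha> - w * \<gamma>:] \<noteq> 0" "[:\<delta>, \<gamma>:] \<noteq> 0"
    using assms by (auto simp: algebra_simps)
  then have "finite ({z. poly [:\<beta> - w * \<delta>, \<alpha> - w * \<gamma>:] z = 0} \<union> {z. poly [:\<delta>, \<gamma>:] z = 0})"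
    by (simp only: finite_Un) (blast intro: poly_roots_finite)
  moreover have "moebius \<alpha> \<beta> \<gamma> \<delta> -` {w} \<subseteq>
      {z. poly [:\<beta> - w * \<delta>, \<alpha> - w * \<gamma>:] z = 0} \<union> {z. poly [:\<delta>, \<gamma>:] z = 0}"
  proof
    fix z assume "z \<in> moebius \<alpha> \<beta> \<gamma> \<delta> -` {w}"
    then have "\<alpha> * z + \<beta> = w * (\<gamma> * z + \<delta>) \<or> \<gamma> * z + \<delta> = 0"
      by (auto simp: moebius_def divide_eq_eq)
    then show "z \<in> {z. poly [:\<beta> - w * \<delta>, \<alpha> - w * \<gamma>:] z = 0} \<union> {z. poly [:\<delta>, \<gamma>:] z = 0}"
      by (auto simp: algebra_simps)
  qed
  ultimately show ?thesis by (rule finite_subset[rotated])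
qed

lemma MOST_comp_finite_fibres:
  assumes "\<And>y. finite (g -` {y})" "MOST y. P y"
  shows "MOST z. P (g z)"
proof -
  have "{z. \<not> P (g z)} = (\<Union>y\<in>{y. \<not> P y}. g -` {y})" by auto
  with assms show ?thesis by (simp add: MOST_iff_cofinite)
qed

lemmas MOST_comp_moebius = MOST_comp_finite_fibres[OF finite_fibres_moebius]

lemma rational_fun_moebius: "rational_fun (moebius \<alpha> \<beta> \<gamma> \<delta>)"
  unfolding moebius_def
  by (intro rational_fun_divide rational_fun_add rational_fun_mult rational_fun_const rational_fun_ident)

lemma rational_fun_poly_comp: "rational_fun g \<Longrightarrow> rational_fun (\<lambda>z. poly P (g z))"
  by (induction P) (simp_all add: rational_fun_const rational_fun_add rational_fun_mult)

lemma rational_fun_comp_moebius: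
  assumes h: "rational_fun h" and det: "\<alpha> * \<delta> - \<beta> * \<gamma> \<noteq> 0"
  shows "rational_fun (\<lambda>z. h (moebius \<alpha> \<beta> \<gamma> \<delta> z))"
proof -
  obtain P Q where "Q \<noteq> 0" and "MOST z. h z = poly P z / poly Q z"
    using h by (rule rational_funE)
  then have "MOST z. h (moebius \<alpha> \<beta> \<gamma> \<delta> z) =
      poly P (moebius \<alpha> \<beta> \<gamma> \<delta> z) / poly Q (moebius \<alpha> \<beta> \<gamma> \<delta> z)"
    by (intro MOST_comp_moebius[OF det])
  then show ?thesis
    by (rule rational_fun_cong[rotated])
      (intro rational_fun_divide rational_fun_poly_comp rational_fun_moebius)
qed

lemma MOST_quadratic_eq_0:
  assumes "MOST z. c2 * z\<^sup>2 + c1 * z + c0 = (0::complex)"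
  shows "c2 = 0 \<and> c1 = 0 \<and> c0 = 0"
proof -
  have "infinite {z. poly [:c0, c1, c2:] z = 0}"
    using MOST_imp_infinite[OF assms] by (simp add: algebra_simps power2_eq_square)
  then have "[:c0, c1, c2:] = 0" using poly_roots_finite by blast
  then show ?thesis by simp
qed

lemma moebius_app_eqI:
  assumes det: "\<alpha> * \<delta> - \<beta> * \<gamma> \<noteq> 0" and det': "\<alpha>' * \<delta>' - \<beta>' * \<gamma>' \<noteq> 0"
    and eq: "MOST z. moebius \<alpha> \<beta> \<gamma> \<delta> z = moebius \<alpha>' \<beta>' \<gamma>' \<delta>' z"
  shows "moebius_app \<alpha> \<beta> \<gamma> \<delta> = moebius_app \<alpha>' \<beta>' \<gamma>' \<delta>'"
proof -
  have "MOST z. (\<alpha> * \<gamma>' - \<alpha>' * \<gamma>) * z\<^sup>2 + (\<alpha> * \<delta>' + \<beta> * \<gamma>' - \<alpha>' * \<delta> - \<beta>' * \<gamma>) * z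
      + (\<beta> * \<delta>' - \<beta>' * \<delta>) = 0"
    using eq MOST_moebius_denominator_nonzero[OF det] MOST_moebius_denominator_nonzero[OF det']
    by eventually_elim (simp add: moebius_def field_simps power2_eq_square)
  then have coeffs: "\<alpha> * \<gamma>' - \<alpha>' * \<gamma> = 0" "\<alpha> * \<delta>' + \<beta> * \<gamma>' - \<alpha>' * \<delta> - \<beta>' * \<gamma> = 0"
    "\<beta> * \<delta>' - \<beta>' * \<delta> = 0"
    by (auto dest: MOST_quadratic_eq_0)
  then have lead: "\<alpha> * \<gamma>' = \<alpha>' * \<gamma>" by simp
  have cross: "(\<alpha> * z + \<beta>) * (\<gamma>' * z + \<delta>') = (\<alpha>' * z + \<beta>') * (\<gamma> * z + \<delta>)" for z
  proof -
    have "(\<alpha> * z + \<beta>) * (\<gamma>' * z + \<delta>') - (\<alpha>' * z + \<beta>') * (\<gamma> * z + \<delta>) =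
        (\<alpha> * \<gamma>' - \<alpha>' * \<gamma>) * z\<^sup>2 + (\<alpha> * \<delta>' + \<beta> * \<gamma>' - \<alpha>' * \<delta> - \<beta>' * \<gamma>) * z + (\<beta> * \<delta>' - \<beta>' * \<delta>)"
      by (simp add: algebra_simps power2_eq_square)
    with coeffs show ?thesis by simp
  qed
  show ?thesis
  proof
    fix x show "moebius_app \<alpha> \<beta> \<gamma> \<delta> x = moebius_app \<alpha>' \<beta>' \<gamma>' \<delta>' x"
    proof (cases x)
      case None
      have "\<gamma> = 0 \<longleftrightarrow> \<gamma>' = 0"
        using lead det det' by auto
      with lead show ?thesis
        by (auto simp: None moebius_app_def field_simps)
    next
      case (Some z)
      have "\<gamma> * z + \<delta> = 0 \<longleftrightarrow> \<gamma>' * z + \<delta>' = 0"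
        using cross[of z] moebius_pole_numerator_nonzero[OF det] moebius_pole_numerator_nonzero[OF det']
        by (metis mult_eq_0_iff)
      with cross[of z] show ?thesis
        by (auto simp: Some moebius_app_def field_simps)
    qed
  qed
qed

lemma is_moebius_moebius_app: "\<alpha> * \<delta> - \<beta> * \<gamma> \<noteq> 0 \<Longrightarrow> is_moebius (moebius_app \<alpha> \<beta> \<gamma> \<delta>)"
  unfolding is_moebius_def by blast

lemma moebius_app_ident: "moebius_app 1 0 0 1 = id"
  by (rule ext, simp add: moebius_app_def split: option.split)

lemma moebius_app_uminus: "moebius_app (-1) 0 0 1 = map_option uminus"
  by (rule ext, simp add: moebius_app_def split: option.split)

lemma moebius_app_reciprocal:
  "moebius_app 0 c 1 0 None = Some 0" "moebius_app 0 c 1 0 (Some 0) = None"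
  "z \<noteq> 0 \<Longrightarrow> moebius_app 0 c 1 0 (Some z) = Some (c / z)"
  by (simp_all add: moebius_app_def)

lemma moebius_app_uminus_involution: "moebius_app (-1) 0 0 1 \<circ> moebius_app (-1) 0 0 1 = id"
  by (simp add: moebius_app_uminus fun_eq_iff option.map_comp option.map_id)

lemma moebius_app_reciprocal_involution:
  assumes "c \<noteq> 0"
  shows "moebius_app 0 c 1 0 \<circ> moebius_app 0 c 1 0 = id"
proof
  fix x show "(moebius_app 0 c 1 0 \<circ> moebius_app 0 c 1 0) x = id x"
  proof (cases x)
    case (Some z)
    with assms show ?thesis by (cases "z = 0") (simp_all add: moebius_app_reciprocal)
  qed (simp add: moebius_app_reciprocal)
qed

lemma moebius_app_uminus_comp_reciprocal: "moebius_app (-1) 0 0 1 \<circ> moebius_app 0 c 1 0 = moebius_app 0 (- c) 1 0"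
  by (simp add: moebius_app_def fun_eq_iff split: option.split)

lemma moebius_app_reciprocal_comp_uminus: "moebius_app 0 c 1 0 \<circ> moebius_app (-1) 0 0 1 = moebius_app 0 (- c) 1 0"
  by (simp add: moebius_app_def fun_eq_iff split: option.split)

section \<open>Squares of rational functions have no simple zeros\<close>

lemma MOST_imp_eventually_at:
  fixes z0 :: "'a::t1_space"
  assumes "MOST z. P z"
  shows "eventually P (at z0)"
proof -
  have "open (- ({z. \<not> P z} - {z0}))"
    using assms by (intro open_Compl finite_imp_closed) (simp add: MOST_iff_cofinite)
  then show ?thesis unfolding eventually_at_topological by (intro exI[of _ "- ({z. \<not> P z} - {z0})"]) auto
qed

lemma isCont_eventually_eq:
  fixes f g :: "complex \<Rightarrow> complex"
  assumes "isCont f z0" "isCont g z0" "eventually (\<lambda>z. f z = g z) (at z0)"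
  shows "f z0 = g z0"
proof (rule tendsto_unique[OF at_neq_bot])
  show "(f \<longlongrightarrow> f z0) (at z0)" using assms(1) by (simp add: isCont_def)
  show "(f \<longlongrightarrow> g z0) (at z0)"
    using assms(2) tendsto_cong[OF assms(3)] by (simp add: isCont_def)
qed

lemma square_no_simple_zero:
  fixes R S :: "complex \<Rightarrow> complex"
  assumes R: "(R has_field_derivative R') (at z0)"
    and S: "(S has_field_derivative S') (at z0)" "S' \<noteq> 0" "S z0 = 0"
    and eq: "eventually (\<lambda>z. (R z)\<^sup>2 = S z) (at z0)"
  shows False
proof -
  have ev: "eventually (\<lambda>z. R z * R z = S z) (at z0)"
    using eq by (simp add: power2_eq_square)
  have R_sq: "R z0 * R z0 = S z0"
    using DERIV_isCont[OF R] DERIV_isCont[OF S(1)] ev by (intro isCont_eventually_eq isCont_mult)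
  have "((\<lambda>z. R z * R z) has_field_derivative R' * R z0 + R' * R z0) (at z0)"
    by (rule DERIV_mult[OF R R])
  with ev R_sq have "(S has_field_derivative R' * R z0 + R' * R z0) (at z0)"
    by (simp add: has_field_derivative_cong_eventually)
  then have "S' = R' * R z0 + R' * R z0" by (rule DERIV_unique[OF S(1)])
  moreover have "R z0 = 0" using R_sq S(3) by simp
  ultimately show False using S(2) by simp
qed

lemma poly_quotient_square_no_simple_zero:
  fixes P Q :: "complex poly"
  assumes "Q \<noteq> 0" and S: "(S has_field_derivative S') (at z0)" "S' \<noteq> 0" "S z0 = 0"
    and "eventually (\<lambda>z. (poly P z / poly Q z)\<^sup>2 = S z) (at z0)"
  shows False
  using assms(1,5)
proof (induction "degree Q" arbitrary: P Q rule: less_induct)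
  case less
  show False
  proof (cases "poly Q z0 = 0")
    case False
    obtain R' where "((\<lambda>z. poly P z / poly Q z) has_field_derivative R') (at z0)"
      using DERIV_divide[OF poly_DERIV poly_DERIV False] by blast
    from square_no_simple_zero[OF this S less.prems(2)] show False .
  next
    case Q0: True
    obtain Q1 where Q1: "Q = [:-z0, 1:] * Q1"
      using Q0 by (auto simp: poly_eq_0_iff_dvd dvd_def)
    with less.prems(1) have "Q1 \<noteq> 0" by auto
    then have "degree Q1 < degree Q"
      unfolding Q1 by (subst degree_mult_eq) auto
    show False
    proof (cases "poly P z0 = 0")
      case True
      obtain P1 where P1: "P = [:-z0, 1:] * P1"
        using True by (auto simp: poly_eq_0_iff_dvd dvd_def)
      have "eventually (\<lambda>z. (poly P1 z / poly Q1 z)\<^sup>2 = S z) (at z0)"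
        using less.prems(2) eventually_neq_at_within[of z0 z0 UNIV]
        by eventually_elim (simp only: P1 Q1 poly_mult, simp)
      with less.hyps \<open>Q1 \<noteq> 0\<close> \<open>degree Q1 < degree Q\<close> show False by blast
    next
      case False
      have "eventually (\<lambda>z. poly Q z \<noteq> 0) (at z0)"
        using MOST_poly_nonzero[OF less.prems(1)] by (rule MOST_imp_eventually_at)
      with less.prems(2) have "eventually (\<lambda>z. (poly P z)\<^sup>2 = S z * (poly Q z)\<^sup>2) (at z0)"
        by eventually_elim (simp add: power_divide divide_eq_eq)
      then have "(poly P z0)\<^sup>2 = S z0 * (poly Q z0)\<^sup>2"
        using DERIV_isCont[OF S(1)]
        by (intro isCont_eventually_eq) (auto intro!: isCont_mult isCont_power poly_isCont)
      with False S(3) show False by simp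
    qed
  qed
qed

lemma rational_fun_square_no_simple_zero:
  assumes "rational_fun h" "(S has_field_derivative S') (at z0)" "S' \<noteq> 0" "S z0 = 0"
    and "eventually (\<lambda>z. (h z)\<^sup>2 = S z) (at z0)"
  shows False
proof -
  obtain P Q where Q: "Q \<noteq> 0" and h: "MOST z. h z = poly P z / poly Q z"
    using assms(1) by (rule rational_funE)
  have "eventually (\<lambda>z. (poly P z / poly Q z)\<^sup>2 = S z) (at z0)"
    using assms(5) MOST_imp_eventually_at[OF h] by eventually_elim simp
  then show False by (rule poly_quotient_square_no_simple_zero[OF Q assms(2-4)])
qed

section \<open>The map \<open>f\<^sub>a\<close> on \<open>\<complex>\<close>\<close>

definition f_cplx :: "complex \<Rightarrow> complex \<Rightarrow> complex" where
  "f_cplx a w = (w\<^sup>2 - a) / (w\<^sup>2 + a)"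

lemma f_map_Some: "z\<^sup>2 + a \<noteq> 0 \<Longrightarrow> f_map a (Some z) = Some (f_cplx a z)"
  by (simp add: f_map_def f_cplx_def)

lemma f_cplx_uminus [simp]: "f_cplx a (- w) = f_cplx a w"
  by (simp add: f_cplx_def)

lemma f_cplx_divide:
  assumes "a \<noteq> 0" "w \<noteq> 0"
  shows "f_cplx a (a / w) = - f_cplx a w"
proof -
  have "(a / w)\<^sup>2 - a = - a * (w\<^sup>2 - a) / w\<^sup>2" "(a / w)\<^sup>2 + a = a * (w\<^sup>2 + a) / w\<^sup>2"
    using assms(2) by (simp_all add: field_simps power2_eq_square)
  with assms show ?thesis by (simp add: f_cplx_def)
qed

lemma f_cplx_eqD:
  assumes "a \<noteq> 0" "v\<^sup>2 + a \<noteq> 0" "w\<^sup>2 + a \<noteq> 0" "f_cplx a v = f_cplx a w"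
  shows "v\<^sup>2 = w\<^sup>2"
proof -
  have "(v\<^sup>2 - a) * (w\<^sup>2 + a) = (w\<^sup>2 - a) * (v\<^sup>2 + a)"
    using assms(2-4) by (simp add: f_cplx_def field_simps)
  then have "2 * a * (v\<^sup>2 - w\<^sup>2) = 0" by (simp add: algebra_simps)
  with assms(1) show ?thesis by simp
qed

lemma f_cplx_eq_uminusD:
  assumes "v\<^sup>2 + a \<noteq> 0" "w\<^sup>2 + a \<noteq> 0" "f_cplx a v = - f_cplx a w"
  shows "(v * w)\<^sup>2 = a\<^sup>2"
proof -
  have "(v\<^sup>2 - a) * (w\<^sup>2 + a) = - ((w\<^sup>2 - a) * (v\<^sup>2 + a))"
    using assms by (simp add: f_cplx_def field_simps)
  then have "2 * ((v * w)\<^sup>2 - a\<^sup>2) = 0" by (simp add: algebra_simps power2_eq_square)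
  then show ?thesis by simp
qed

lemma f_cplx_solve:
  assumes "f_cplx a w = h" "h \<noteq> 0" "h \<noteq> 1"
  shows "w\<^sup>2 = a * (1 + h) / (1 - h)"
proof -
  have "w\<^sup>2 + a \<noteq> 0" using assms(1,2) by (auto simp: f_cplx_def)
  with assms(1) have "w\<^sup>2 - a = h * (w\<^sup>2 + a)" by (simp add: f_cplx_def field_simps)
  with assms(3) show ?thesis by (simp add: field_simps)
qed

lemma f_cplx_has_derivative:
  assumes "w\<^sup>2 + a \<noteq> 0"
  shows "(f_cplx a has_field_derivative 4 * a * w / (w\<^sup>2 + a)\<^sup>2) (at w)"
proof -
  have "((\<lambda>w. (w\<^sup>2 - a) / (w\<^sup>2 + a)) has_field_derivative
      (2 * w * (w\<^sup>2 + a) - (w\<^sup>2 - a) * (2 * w)) / ((w\<^sup>2 + a) * (w\<^sup>2 + a))) (at w)"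
    using assms by (auto intro!: derivative_eq_intros)
  moreover have "2 * w * (w\<^sup>2 + a) - (w\<^sup>2 - a) * (2 * w) = 4 * a * w"
    by (simp add: algebra_simps)
  ultimately show ?thesis
    by (simp add: f_cplx_def[abs_def] power2_eq_square)
qed

lemma rational_fun_f_cplx_iterate: "rational_fun (f_cplx a ^^ n)"
proof (induction n)
  case 0
  show ?case using rational_fun_ident by (simp add: id_def)
next
  case (Suc n)
  then show ?case
    unfolding funpow.simps comp_def f_cplx_def
    by (intro rational_fun_divide rational_fun_diff rational_fun_add rational_fun_power2 rational_fun_const)
qed

lemma finite_fibres_f_map:
  assumes "a \<noteq> 0"
  shows "finite (f_map a -` {y})"
proof (cases y)
  case None
  have "f_map a -` {y} \<subseteq> Some ` {z. poly [:a, 0, 1:] z = 0}"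
  proof
    fix x assume x: "x \<in> f_map a -` {y}"
    then obtain z where z: "x = Some z" by (cases x) (auto simp: None f_map_def)
    with x have "z\<^sup>2 + a = 0" by (auto simp: None f_map_def split: if_splits)
    then show "x \<in> Some ` {z. poly [:a, 0, 1:] z = 0}"
      by (simp add: z algebra_simps power2_eq_square)
  qed
  then show ?thesis by (rule finite_subset) (rule finite_imageI[OF poly_roots_finite], simp)
next
  case (Some w)
  have "[:- a * (1 + w), 0, 1 - w:] \<noteq> 0" using assms by auto
  moreover have "f_map a -` {y} \<subseteq> insert None (Some ` {z. poly [:- a * (1 + w), 0, 1 - w:] z = 0})"
  proof
    fix x assume x: "x \<in> f_map a -` {y}"
    show "x \<in> insert None (Some ` {z. poly [:- a * (1 + w), 0, 1 - w:] z = 0})"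
    proof (cases x)
      case (Some z)
      with x have eq: "f_map a (Some z) = Some w" by (simp add: \<open>y = Some w\<close>)
      then have nz: "z\<^sup>2 + a \<noteq> 0" by (auto simp: f_map_def split: if_splits)
      with eq have "f_cplx a z = w" by (simp add: f_map_Some)
      with nz have "z\<^sup>2 - a = w * (z\<^sup>2 + a)" by (simp add: f_cplx_def field_simps)
      then have "poly [:- a * (1 + w), 0, 1 - w:] z = 0"
        by (simp add: algebra_simps power2_eq_square)
      with Some show ?thesis by auto
    qed simp
  qed
  ultimately show ?thesis by (blast intro: finite_subset finite_imageI poly_roots_finite)
qed

lemma finite_fibres_funpow:
  fixes f :: "'a \<Rightarrow> 'a"
  assumes "\<And>y. finite (f -` {y})"
  shows "finite ((f ^^ n) -` {y})"
proof (induction n arbitrary: y)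
  case (Suc n)
  have "(f ^^ Suc n) -` {y} = (\<Union>x\<in>f -` {y}. (f ^^ n) -` {x})" by auto
  then show ?case by (simp only:) (intro finite_UN_I assms Suc.IH)
qed simp

lemma MOST_neq_if_agrees:
  assumes "MOST z. F (Some z) = Some (g z)" "\<And>y. finite (F -` {y})"
  shows "MOST z. g z \<noteq> t"
proof -
  have "{z. \<not> g z \<noteq> t} \<subseteq> {z. \<not> F (Some z) = Some (g z)} \<union> Some -` (F -` {Some t})"
    by auto
  moreover have "finite (Some -` (F -` {Some t}))"
    by (rule finite_vimageI[OF assms(2)]) simp
  ultimately show ?thesis
    using assms(1) by (simp add: MOST_iff_cofinite finite_subset)
qed

lemma MOST_pole_free_if_agrees:
  fixes a :: complex
  assumes "MOST z. F (Some z) = Some (g z)" "\<And>y. finite (F -` {y})"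
  shows "MOST z. (g z)\<^sup>2 + a \<noteq> 0"
  using MOST_neq_if_agrees[OF assms, of "csqrt (- a)"] MOST_neq_if_agrees[OF assms, of "- csqrt (- a)"]
proof eventually_elim
  case (elim z)
  then show ?case
    using power2_eq_iff[of "g z" "csqrt (- a)"] by (auto simp: add_eq_0_iff2)
qed

locale f_family =
  fixes a :: complex
  assumes a_nonzero: "a \<noteq> 0"
begin

lemma finite_fibres_f_map_iterate: "finite ((f_map a ^^ n) -` {y})"
  by (intro finite_fibres_funpow finite_fibres_f_map a_nonzero)

lemma iterate_agrees: "MOST z. (f_map a ^^ n) (Some z) = Some ((f_cplx a ^^ n) z)"
proof (induction n)
  case (Suc n)
  show ?case
    using Suc MOST_pole_free_if_agrees[OF Suc finite_fibres_f_map_iterate, of a]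
    by eventually_elim (simp add: f_map_Some)
qed simp

lemma MOST_iterate_neq: "MOST z. (f_cplx a ^^ n) z \<noteq> t"
  by (rule MOST_neq_if_agrees[OF iterate_agrees finite_fibres_f_map_iterate])

lemma MOST_iterate_pole_free: "MOST z. ((f_cplx a ^^ n) z)\<^sup>2 + a \<noteq> 0"
  by (rule MOST_pole_free_if_agrees[OF iterate_agrees finite_fibres_f_map_iterate])

lemma f_map_comp_uminus: "f_map a \<circ> moebius_app (-1) 0 0 1 = f_map a"
  by (simp add: moebius_app_uminus fun_eq_iff f_map_def split: option.split)

lemma f_map_comp_reciprocal: "f_map a \<circ> moebius_app 0 a 1 0 = moebius_app (-1) 0 0 1 \<circ> f_map a"
proof
  fix x show "(f_map a \<circ> moebius_app 0 a 1 0) x = (moebius_app (-1) 0 0 1 \<circ> f_map a) x"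
  proof (cases x)
    case (Some z)
    show ?thesis
    proof (cases "z = 0")
      case False
      have "(a / z)\<^sup>2 + a = a * (z\<^sup>2 + a) / z\<^sup>2"
        using False by (simp add: field_simps power2_eq_square)
      then have pole_free: "(a / z)\<^sup>2 + a \<noteq> 0 \<longleftrightarrow> z\<^sup>2 + a \<noteq> 0"
        using False a_nonzero by simp
      show ?thesis
      proof (cases "z\<^sup>2 + a = 0")
        case False
        with pole_free \<open>z \<noteq> 0\<close> a_nonzero show ?thesis
          by (simp add: Some moebius_app_reciprocal moebius_app_uminus f_map_Some f_cplx_divide)
      qed (use pole_free \<open>z \<noteq> 0\<close> in \<open>simp add: Some moebius_app_reciprocal moebius_app_uminus f_map_def\<close>)
    qed (simp add: Some moebius_app_reciprocal moebius_app_uminus f_map_def a_nonzero)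
  qed (simp add: moebius_app_reciprocal moebius_app_uminus f_map_def a_nonzero)
qed

lemma f_cplx_preimage:
  assumes "t \<noteq> 1" "t \<noteq> -1" "t \<noteq> f_cplx a 1"
  shows "\<exists>w. f_cplx a w = t \<and> w\<^sup>2 + a \<noteq> 0 \<and> w \<notin> {0, 1, -1, f_cplx a 1}"
proof -
  define r where "r = csqrt (a * (1 + t) / (1 - t))"
  have t: "1 - t \<noteq> 0" "1 + t \<noteq> 0" using assms(1,2) by (auto simp: add_eq_0_iff)
  have r2: "r\<^sup>2 = a * (1 + t) / (1 - t)" by (simp add: r_def)
  have r_pole_free: "r\<^sup>2 + a \<noteq> 0" and fr: "f_cplx a r = t"
    using a_nonzero t by (simp_all add: r2 f_cplx_def field_simps)
  have "r \<noteq> 0" using a_nonzero t r2 by auto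
  moreover have "r \<noteq> 1 \<and> r \<noteq> -1"
    using fr assms(3) by (metis f_cplx_uminus)
  ultimately have "f_cplx a w = t \<and> w\<^sup>2 + a \<noteq> 0 \<and> w \<notin> {0, 1, -1, f_cplx a 1}"
    if "w = r \<or> w = - r" "w \<noteq> f_cplx a 1" for w
    using that fr r_pole_free by (auto simp: minus_equation_iff)
  moreover have "r \<noteq> f_cplx a 1 \<or> - r \<noteq> f_cplx a 1"
    using \<open>r \<noteq> 0\<close> by auto
  ultimately show ?thesis by blast
qed

text \<open>The critical values of \<open>f\<^sub>a\<close> are \<open>-1 = f\<^sub>a(0)\<close> and \<open>1 = f\<^sub>a(\<infinity>)\<close>, and \<open>f\<^sub>a(1) = f\<^sub>a(-1)\<close>;
  excluding \<open>0\<close>, \<open>\<plusminus>1\<close> and \<open>f\<^sub>a(1)\<close> lets every preimage in the chain avoid them again.\<close>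

lemma noncritical_point:
  assumes "t \<notin> {0, 1, -1, f_cplx a 1}"
  shows "\<exists>z D. (f_cplx a ^^ n) z = t \<and> D \<noteq> 0 \<and> ((f_cplx a ^^ n) has_field_derivative D) (at z)"
  using assms
proof (induction n arbitrary: t)
  case 0
  show ?case by (intro exI[of _ t] exI[of _ 1]) simp
next
  case (Suc n)
  obtain w where w: "f_cplx a w = t" "w\<^sup>2 + a \<noteq> 0" "w \<notin> {0, 1, -1, f_cplx a 1}"
    using f_cplx_preimage Suc.prems by auto
  obtain z D where z: "(f_cplx a ^^ n) z = w" "D \<noteq> 0"
    and D: "((f_cplx a ^^ n) has_field_derivative D) (at z)"
    using Suc.IH[OF w(3)] by blast
  have "(f_cplx a ^^ Suc n) z = t" using z w by simp
  moreover have "4 * a * w / (w\<^sup>2 + a)\<^sup>2 * D \<noteq> 0" using a_nonzero w z by simp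
  moreover have "((f_cplx a ^^ Suc n) has_field_derivative 4 * a * w / (w\<^sup>2 + a)\<^sup>2 * D) (at z)"
    unfolding funpow.simps by (rule DERIV_chain[OF _ D]) (simp add: z(1) f_cplx_has_derivative[OF w(2)])
  ultimately show ?case by blast
qed

text \<open>The function \<open>H = c/G\<close> takes the value \<open>-1\<close> at \<open>z\<^sub>0\<close> with nonzero derivative, so
  \<open>A\<^sup>2 = a(1 + H)/(1 - H)\<close> would have a simple zero there.\<close>

lemma no_rational_lift:
  assumes A: "rational_fun A" and c: "c \<noteq> 0"
    and G: "(G has_field_derivative D) (at z0)" "D \<noteq> 0" "G z0 = - c"
    and lift: "MOST z. f_cplx a (A z) = c / G z"
  shows False
proof -
  define H where "H z = c / G z" for z
  define H' where "H' = - (c * D) / (G z0 * G z0)"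
  have H0: "H z0 = -1" using c G(3) by (simp add: H_def)
  have H': "(H has_field_derivative H') (at z0)"
    using DERIV_divide[OF DERIV_const[of c] G(1)] c G(3) by (simp add: H_def[abs_def] H'_def)
  have "H' \<noteq> 0" using c G by (simp add: H'_def)
  have "(H \<longlongrightarrow> -1) (at z0)"
    using DERIV_isCont[OF H'] H0 by (simp add: isCont_def)
  then have "eventually (\<lambda>z. dist (H z) (-1) < 1) (at z0)"
    by (rule tendstoD) simp
  moreover have "eventually (\<lambda>z. f_cplx a (A z) = H z) (at z0)"
    using MOST_imp_eventually_at[OF lift] by (simp add: H_def)
  ultimately have sq: "eventually (\<lambda>z. (A z)\<^sup>2 = a * (1 + H z) / (1 - H z)) (at z0)"
  proof eventually_elim
    case (elim z)
    then have "H z \<noteq> 0" "H z \<noteq> 1" by (auto simp: dist_norm)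
    with elim show ?case by (intro f_cplx_solve) auto
  qed
  have "((\<lambda>z. a * (1 + H z) / (1 - H z)) has_field_derivative a * H' / 2) (at z0)"
    using H' H0 by (auto intro!: derivative_eq_intros simp: field_simps)
  from rational_fun_square_no_simple_zero[OF A this _ _ sq]
  show False using a_nonzero \<open>H' \<noteq> 0\<close> H0 by simp
qed

end

section \<open>Invariance under iteration and the Klein four-group\<close>

lemma funpow_Suc_comp_invariant:
  fixes f :: "'a \<Rightarrow> 'a"
  assumes "f \<circ> \<sigma> = f"
  shows "(f ^^ Suc n) \<circ> \<sigma> = f ^^ Suc n"
  by (simp only: funpow_Suc_right comp_assoc assms)

lemma funpow_Suc_Suc_comp_twisted_invariant:
  fixes f :: "'a \<Rightarrow> 'a"
  assumes "f \<circ> \<iota> = f" "f \<circ> \<sigma> = \<iota> \<circ> f"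
  shows "(f ^^ Suc (Suc n)) \<circ> \<sigma> = f ^^ Suc (Suc n)"
proof -
  have "(f ^^ Suc (Suc n)) \<circ> \<sigma> = ((f ^^ Suc n) \<circ> \<iota>) \<circ> f"
    by (simp only: funpow_Suc_right[of "Suc n"] comp_assoc assms(2))
  also have "\<dots> = f ^^ Suc (Suc n)"
    by (simp only: funpow_Suc_comp_invariant[OF assms(1)] funpow_Suc_right[of "Suc n"])
  finally show ?thesis .
qed

definition klein :: "('a \<Rightarrow> 'a) \<Rightarrow> ('a \<Rightarrow> 'a) \<Rightarrow> bool \<times> bool \<Rightarrow> 'a \<Rightarrow> 'a" where
  "klein N S = (\<lambda>(p, q). (if p then N else id) \<circ> (if q then S else id))"

lemma group_V4: "group V4"
  by (rule groupI) (auto simp: V4_def)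

lemma klein_mult:
  assumes "N \<circ> N = id" "S \<circ> S = id" "N \<circ> S = S \<circ> N"
  shows "klein N S (x \<otimes>\<^bsub>V4\<^esub> y) = klein N S x \<circ> klein N S y"
proof -
  have "N (N u) = u" "S (S u) = u" "N (S u) = S (N u)" for u
    using assms by (metis comp_apply id_apply)+
  then show ?thesis
    by (cases x; cases y) (auto simp: V4_def klein_def fun_eq_iff)
qed

lemma Deck_group_klein:
  assumes "N \<circ> N = id" "S \<circ> S = id" "N \<circ> S = S \<circ> N"
    and "inj (klein N S)" "Deck F = range (klein N S)"
  shows "group (Deck_group F)" "Deck_group F \<cong> V4"
proof -
  have hom: "klein N S \<in> hom V4 (Deck_group F)"
    using assms(5) klein_mult[OF assms(1-3)] by (auto simp: hom_def Deck_group_def V4_def)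
  have "klein N S (False, False) = id" by (simp add: klein_def)
  then have "Deck_group F \<lparr>carrier := klein N S ` carrier V4, one := klein N S \<one>\<^bsub>V4\<^esub>\<rparr> = Deck_group F"
    using assms(5) by (simp add: Deck_group_def V4_def)
  with group.hom_imp_img_group[OF group_V4 hom] show "group (Deck_group F)" by simp
  have "klein N S \<in> iso V4 (Deck_group F)"
    using hom assms(4,5) by (simp add: iso_def bij_betw_def Deck_group_def V4_def)
  then show "Deck_group F \<cong> V4"
    by (intro group.iso_sym[OF group_V4]) (auto simp: is_iso_def)
qed

section \<open>Deck transformations of the iterates\<close>

locale f_generic = f_family +
  assumes a_not_one: "a \<noteq> 1" and a_not_minus_one: "a \<noteq> -1"
begin

lemma no_antiinvariant_iterate:
  assumes det: "\<alpha> * \<delta> - \<beta> * \<gamma> \<noteq> 0" and c: "c = a \<or> c = - a"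
  shows "\<not> (MOST z. (f_cplx a ^^ Suc k) (moebius \<alpha> \<beta> \<gamma> \<delta> z) = c / (f_cplx a ^^ Suc k) z)"
proof
  define A where "A z = (f_cplx a ^^ k) (moebius \<alpha> \<beta> \<gamma> \<delta> z)" for z
  assume "MOST z. (f_cplx a ^^ Suc k) (moebius \<alpha> \<beta> \<gamma> \<delta> z) = c / (f_cplx a ^^ Suc k) z"
  then have lift: "MOST z. f_cplx a (A z) = c / (f_cplx a ^^ Suc k) z"
    by (simp add: A_def)
  have A: "rational_fun A"
    unfolding A_def[abs_def] by (rule rational_fun_comp_moebius[OF rational_fun_f_cplx_iterate det])
  have c_generic: "c \<notin> {0, 1, -1}" "- c \<notin> {0, 1, -1}"
    using c a_nonzero a_not_one a_not_minus_one by (auto simp: minus_equation_iff)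
  show False
  proof (cases "- c = f_cplx a 1")
    \<comment> \<open>\<open>f\<^sub>a(1) = f\<^sub>a\<^sup>2(0)\<close> is a critical value of the iterates; if \<open>-c\<close> equals it,
      use \<open>c\<close> and \<open>a/A\<close> instead, as \<open>f\<^sub>a(a/w) = -f\<^sub>a(w)\<close>.\<close>
    case False
    with c_generic obtain z0 D where z0: "(f_cplx a ^^ Suc k) z0 = - c" "D \<noteq> 0"
      "((f_cplx a ^^ Suc k) has_field_derivative D) (at z0)"
      using noncritical_point[of "- c" "Suc k"] by auto
    show False
      by (rule no_rational_lift[OF A _ z0(3,2,1) lift]) (use c_generic in simp)
  next
    case True
    have "c \<noteq> f_cplx a 1"
    proof
      assume "c = f_cplx a 1"
      with True have "- c = c" by simp
      with c_generic show False by simp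
    qed
    with c_generic obtain z0 D where z0: "(f_cplx a ^^ Suc k) z0 = - (- c)" "D \<noteq> 0"
      "((f_cplx a ^^ Suc k) has_field_derivative D) (at z0)"
      using noncritical_point[of c "Suc k"] by auto
    have "rational_fun (\<lambda>z. a / A z)"
      by (intro rational_fun_divide rational_fun_const A)
    moreover have "MOST z. f_cplx a (a / A z) = - c / (f_cplx a ^^ Suc k) z"
      using lift MOST_comp_moebius[OF det MOST_iterate_neq[of k 0]]
    proof eventually_elim
      case (elim z)
      then have "A z \<noteq> 0" by (simp add: A_def)
      with elim(1) show ?case by (simp add: f_cplx_divide a_nonzero)
    qed
    ultimately show False
      using c_generic by (intro no_rational_lift[OF _ _ z0(3,2,1)]) simp_all
  qed
qed

lemma invariant_iterate_step:
  assumes det: "\<alpha> * \<delta> - \<beta> * \<gamma> \<noteq> 0"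
    and inv: "MOST z. (f_cplx a ^^ Suc n) (moebius \<alpha> \<beta> \<gamma> \<delta> z) = (f_cplx a ^^ Suc n) z"
  shows "(MOST z. (f_cplx a ^^ n) (moebius \<alpha> \<beta> \<gamma> \<delta> z) = (f_cplx a ^^ n) z)
    \<or> (MOST z. (f_cplx a ^^ n) (moebius \<alpha> \<beta> \<gamma> \<delta> z) = - (f_cplx a ^^ n) z)"
proof (rule rational_fun_square_eq)
  show "rational_fun (\<lambda>z. (f_cplx a ^^ n) (moebius \<alpha> \<beta> \<gamma> \<delta> z))"
    by (rule rational_fun_comp_moebius[OF rational_fun_f_cplx_iterate det])
  show "MOST z. ((f_cplx a ^^ n) (moebius \<alpha> \<beta> \<gamma> \<delta> z))\<^sup>2 = ((f_cplx a ^^ n) z)\<^sup>2"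
    using inv MOST_comp_moebius[OF det MOST_iterate_pole_free[of n]] MOST_iterate_pole_free[of n]
    by eventually_elim (auto intro: f_cplx_eqD[OF a_nonzero])
qed (rule rational_fun_f_cplx_iterate)

lemma antiinvariant_iterate_step:
  assumes det: "\<alpha> * \<delta> - \<beta> * \<gamma> \<noteq> 0"
    and inv: "MOST z. (f_cplx a ^^ Suc n) (moebius \<alpha> \<beta> \<gamma> \<delta> z) = - (f_cplx a ^^ Suc n) z"
  obtains c where "c = a \<or> c = - a"
    and "MOST z. (f_cplx a ^^ n) (moebius \<alpha> \<beta> \<gamma> \<delta> z) = c / (f_cplx a ^^ n) z"
proof -
  have "MOST z. ((f_cplx a ^^ n) (moebius \<alpha> \<beta> \<gamma> \<delta> z) * (f_cplx a ^^ n) z)\<^sup>2 = a\<^sup>2"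
    using inv MOST_comp_moebius[OF det MOST_iterate_pole_free[of n]] MOST_iterate_pole_free[of n]
    by eventually_elim (auto intro: f_cplx_eq_uminusD)
  from rational_fun_square_eq[OF rational_fun_mult rational_fun_const this]
  obtain c where c: "c = a \<or> c = - a"
    and prod: "MOST z. (f_cplx a ^^ n) (moebius \<alpha> \<beta> \<gamma> \<delta> z) * (f_cplx a ^^ n) z = c"
    using rational_fun_comp_moebius[OF rational_fun_f_cplx_iterate det] rational_fun_f_cplx_iterate
    by auto
  have "MOST z. (f_cplx a ^^ n) (moebius \<alpha> \<beta> \<gamma> \<delta> z) = c / (f_cplx a ^^ n) z"
    using prod MOST_iterate_neq[of n 0] by eventually_elim (simp add: field_simps)
  with c show thesis by (rule that)
qed

lemma antiinvariant_iterate: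
  assumes det: "\<alpha> * \<delta> - \<beta> * \<gamma> \<noteq> 0"
    and inv: "MOST z. (f_cplx a ^^ n) (moebius \<alpha> \<beta> \<gamma> \<delta> z) = - (f_cplx a ^^ n) z"
  shows "(MOST z. moebius \<alpha> \<beta> \<gamma> \<delta> z = - z) \<or> (MOST z. moebius \<alpha> \<beta> \<gamma> \<delta> z = a / z)
    \<or> (MOST z. moebius \<alpha> \<beta> \<gamma> \<delta> z = - a / z)"
proof (cases n)
  case (Suc n')
  then obtain c where c: "c = a \<or> c = - a"
    and inv': "MOST z. (f_cplx a ^^ n') (moebius \<alpha> \<beta> \<gamma> \<delta> z) = c / (f_cplx a ^^ n') z"
    using antiinvariant_iterate_step[OF det] inv by blast
  show ?thesis
  proof (cases n')
    case 0
    with c inv' show ?thesis by auto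
  next
    case (Suc k)
    with inv' no_antiinvariant_iterate[OF det c] show ?thesis by blast
  qed
qed (use inv in simp)

lemma invariant_iterate:
  assumes det: "\<alpha> * \<delta> - \<beta> * \<gamma> \<noteq> 0"
    and "MOST z. (f_cplx a ^^ n) (moebius \<alpha> \<beta> \<gamma> \<delta> z) = (f_cplx a ^^ n) z"
  shows "(MOST z. moebius \<alpha> \<beta> \<gamma> \<delta> z = z) \<or> (MOST z. moebius \<alpha> \<beta> \<gamma> \<delta> z = - z)
    \<or> (MOST z. moebius \<alpha> \<beta> \<gamma> \<delta> z = a / z) \<or> (MOST z. moebius \<alpha> \<beta> \<gamma> \<delta> z = - a / z)"
  using assms(2)
proof (induction n)
  case (Suc n)
  then show ?case
    using invariant_iterate_step[OF det] antiinvariant_iterate[OF det] by blast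
qed simp

lemma Deck_iterate_subset:
  "Deck (f_map a ^^ n) \<subseteq> {id, moebius_app (-1) 0 0 1, moebius_app 0 a 1 0, moebius_app 0 (- a) 1 0}"
proof
  fix \<tau> assume "\<tau> \<in> Deck (f_map a ^^ n)"
  then obtain \<alpha> \<beta> \<gamma> \<delta> where det: "\<alpha> * \<delta> - \<beta> * \<gamma> \<noteq> 0" and \<tau>: "\<tau> = moebius_app \<alpha> \<beta> \<gamma> \<delta>"
    and deck: "(f_map a ^^ n) \<circ> \<tau> = f_map a ^^ n"
    by (auto simp: Deck_def is_moebius_def)
  have "MOST z. (f_cplx a ^^ n) (moebius \<alpha> \<beta> \<gamma> \<delta> z) = (f_cplx a ^^ n) z"
    using MOST_moebius_denominator_nonzero[OF det] MOST_comp_moebius[OF det iterate_agrees[of n]]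
      iterate_agrees[of n]
  proof eventually_elim
    case (elim z)
    from deck have "(f_map a ^^ n) (\<tau> (Some z)) = (f_map a ^^ n) (Some z)" by (metis comp_apply)
    with elim show ?case by (simp add: \<tau> moebius_app_Some)
  qed
  then consider "MOST z. moebius \<alpha> \<beta> \<gamma> \<delta> z = moebius 1 0 0 1 z"
    | "MOST z. moebius \<alpha> \<beta> \<gamma> \<delta> z = moebius (-1) 0 0 1 z"
    | "MOST z. moebius \<alpha> \<beta> \<gamma> \<delta> z = moebius 0 a 1 0 z"
    | "MOST z. moebius \<alpha> \<beta> \<gamma> \<delta> z = moebius 0 (- a) 1 0 z"
    using invariant_iterate[OF det] by (auto simp: moebius_def)
  then show "\<tau> \<in> {id, moebius_app (-1) 0 0 1, moebius_app 0 a 1 0, moebius_app 0 (- a) 1 0}"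
    by cases (use a_nonzero moebius_app_eqI[OF det] in \<open>simp_all add: \<tau> moebius_app_ident[symmetric]\<close>)
qed

lemma Deck_iterate:
  assumes "2 \<le> n"
  shows "Deck (f_map a ^^ n) =
    {id, moebius_app (-1) 0 0 1, moebius_app 0 a 1 0, moebius_app 0 (- a) 1 0}"
proof
  show "Deck (f_map a ^^ n) \<subseteq> {id, moebius_app (-1) 0 0 1, moebius_app 0 a 1 0, moebius_app 0 (- a) 1 0}"
    by (rule Deck_iterate_subset)
  obtain m where n: "n = Suc (Suc m)" using assms by (metis add_2_eq_Suc le_Suc_ex)
  have uminus: "(f_map a ^^ n) \<circ> moebius_app (-1) 0 0 1 = f_map a ^^ n"
    unfolding n by (rule funpow_Suc_comp_invariant[OF f_map_comp_uminus])
  have reciprocal: "(f_map a ^^ n) \<circ> moebius_app 0 a 1 0 = f_map a ^^ n"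
    unfolding n by (rule funpow_Suc_Suc_comp_twisted_invariant[OF f_map_comp_uminus f_map_comp_reciprocal])
  have "(f_map a ^^ n) \<circ> moebius_app 0 (- a) 1 0 = f_map a ^^ n"
    by (simp only: moebius_app_uminus_comp_reciprocal[symmetric] comp_assoc[symmetric] uminus reciprocal)
  moreover have "is_moebius id"
    unfolding moebius_app_ident[symmetric] by (rule is_moebius_moebius_app) simp
  ultimately
  show "{id, moebius_app (-1) 0 0 1, moebius_app 0 a 1 0, moebius_app 0 (- a) 1 0} \<subseteq> Deck (f_map a ^^ n)"
    using uminus reciprocal a_nonzero by (auto simp: Deck_def is_moebius_moebius_app)
qed

lemma range_klein:
  "range (klein (moebius_app (-1) 0 0 1) (moebius_app 0 a 1 0)) =
    {id, moebius_app (-1) 0 0 1, moebius_app 0 a 1 0, moebius_app 0 (- a) 1 0}"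
proof -
  have "range (klein (moebius_app (-1) 0 0 1) (moebius_app 0 a 1 0)) =
      klein (moebius_app (-1) 0 0 1) (moebius_app 0 a 1 0) ` {(False, False), (True, False), (False, True), (True, True)}"
    by (rule arg_cong[where f = "image _"]) auto
  then show ?thesis by (simp add: klein_def moebius_app_uminus_comp_reciprocal insert_commute)
qed

lemma inj_klein: "inj (klein (moebius_app (-1) 0 0 1) (moebius_app 0 a 1 0))"
proof
  fix x y
  have val: "klein (moebius_app (-1) 0 0 1) (moebius_app 0 a 1 0) (p, q) (Some 1) =
      Some ((if p then -1 else 1) * (if q then a else 1))" for p q
    using a_nonzero by (simp add: klein_def moebius_app_uminus moebius_app_reciprocal)
  assume "klein (moebius_app (-1) 0 0 1) (moebius_app 0 a 1 0) x =
      klein (moebius_app (-1) 0 0 1) (moebius_app 0 a 1 0) y"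
  then have "klein (moebius_app (-1) 0 0 1) (moebius_app 0 a 1 0) x (Some 1) =
      klein (moebius_app (-1) 0 0 1) (moebius_app 0 a 1 0) y (Some 1)" by simp
  then show "x = y"
    using a_nonzero a_not_one a_not_minus_one
    by (cases x; cases y) (auto simp: val minus_equation_iff split: if_splits)
qed

end

theorem mainTheorem17:
  fixes a :: complex
  assumes "a \<noteq> 0" and "a \<noteq> 1" and "a \<noteq> -1"
  shows "(\<forall>k::nat. k \<ge> 2 \<longrightarrow> group (Deck_group ((f_map a) ^^ k)) \<and> Deck_group ((f_map a) ^^ k) \<cong> V4)
         \<and> Deck ((f_map a) ^^ 2) =
             {id, moebius_app (-1) 0 0 1, moebius_app 0 a 1 0, moebius_app 0 (-a) 1 0}"
proof -
  interpret f_generic a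
    using assms by unfold_locales
  have klein_relations:
    "moebius_app (-1) 0 0 1 \<circ> moebius_app (-1) 0 0 1 = id"
    "moebius_app 0 a 1 0 \<circ> moebius_app 0 a 1 0 = id"
    "moebius_app (-1) 0 0 1 \<circ> moebius_app 0 a 1 0 = moebius_app 0 a 1 0 \<circ> moebius_app (-1) 0 0 1"
    using moebius_app_uminus_involution moebius_app_reciprocal_involution[OF a_nonzero]
    by (simp_all add: moebius_app_uminus_comp_reciprocal moebius_app_reciprocal_comp_uminus)
  have "Deck (f_map a ^^ k) = range (klein (moebius_app (-1) 0 0 1) (moebius_app 0 a 1 0))"
    if "k \<ge> 2" for k
    using Deck_iterate[OF that] range_klein by simp
  with Deck_group_klein[OF klein_relations inj_klein] Deck_iterate[of 2] show ?thesis
    by simp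
qed

end
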